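(* For $n\geqslant 1$ and $m,d\geqslant 0$, let $\mathfrak{B}_{n,m,d}$ be the set of inversion sequences of length $n$ avoiding the pattern $010$ whose maximum value is $m$ and which contain exactly $d$ distinct values, and let $\mathfrak{b}_{n,m,d}=\#\mathfrak{B}_{n,m,d}$ (so $\#\mathbf{I}_n(010)=\sum_{m=0}^{n-1}\sum_{d=0}^{n}\mathfrak{b}_{n,m,d}$, and $\mathfrak{b}_{n,0,d}=1$ if $d=1$ and $0$ otherwise). Then for all $n\geqslant 1$, $m\geqslant 1$ and $d\geqslant 0$, $$\mathfrak{b}_{n,m,d}=\sum_{i=0}^{d-1}\binom{m-i}{d-i-1}\sum_{p=m+1}^{n}\genfrac{[}{]}{0pt}{}{n-p+1}{n-p-d+i+2}\sum_{j=0}^{m-1}\mathfrak{b}_{p-1,j,i}.$$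
   Context: An inversion sequence of length $n$ is a sequence $\sigma=(\sigma_1,\dots,\sigma_n)$ of nonnegative integers with $0\leqslant\sigma_i<i$ for all $i$; $\mathbf{I}_n(P)$ is the set of those avoiding every pattern in $P$. A sequence $\sigma$ contains a pattern $p=(p_1,\dots,p_k)$ if some subsequence $(\sigma_{i_1},\dots,\sigma_{i_k})$, $i_1<\dots<i_k$, is order-isomorphic to $p$; otherwise it avoids $p$. Avoiding $010$ means there are no $i<j<l$ with $\sigma_i=\sigma_l<\sigma_j$. $\genfrac{[}{]}{0pt}{}{a}{b}$ is the unsigned Stirling number of the first kind (permutations of $a$ elements with $b$ cycles), taken to be $0$ if $b\leqslant 0$ (for $a\geqslant1$) or $b>a$. Binomial coefficients $\binom{a}{b}$ are $0$ when $b<0$ or $b>a$. *)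

theory Defs
  imports "HOL-Combinatorics.Stirling"
begin

text \<open>Inversion sequences of length n as lists (0-indexed): entry at position i is at most i,
  i.e. sigma_(i+1) < i+1.\<close>
definition inv_seq :: "nat \<Rightarrow> nat list \<Rightarrow> bool" where
  "inv_seq n s \<longleftrightarrow> length s = n \<and> (\<forall>i<n. s ! i < Suc i)"

definition avoids_010 :: "nat list \<Rightarrow> bool" where
  "avoids_010 s \<longleftrightarrow> \<not> (\<exists>i j l. i < j \<and> j < l \<and> l < length s \<and> s ! i = s ! l \<and> s ! i < s ! j)"

definition Bset :: "nat \<Rightarrow> nat \<Rightarrow> nat \<Rightarrow> nat list set" where
  "Bset n m d = {s. inv_seq n s \<and> avoids_010 s \<and> Max (set s) = m \<and> card (set s) = d}"

definition bnum :: "nat \<Rightarrow> nat \<Rightarrow> nat \<Rightarrow> nat" where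
  "bnum n m d = card (Bset n m d)"

definition binom_int :: "int \<Rightarrow> int \<Rightarrow> nat" where
  "binom_int a b = (if b < 0 \<or> b > a then 0 else nat a choose nat b)"

definition stirling1_int :: "nat \<Rightarrow> int \<Rightarrow> nat" where
  "stirling1_int a b = (if b \<le> 0 then 0 else stirling a (nat b))"

end

theory Submission
  imports Defs
begin

text \<open>Split a sequence of \<open>Bset n m d\<close> at the first occurrence of its maximum \<open>m\<close>, at
  position \<open>p\<close>, as \<open>pre @ m # w\<close>. As \<open>m < p\<close>, the prefix is an arbitrary 010-avoiding
  inversion sequence of length \<open>p - 1\<close> with maximum below \<open>m\<close>, say with \<open>i\<close> values, and the
  inversion condition on \<open>w\<close> is automatic. Avoiding 010 forbids a value of the prefix to reappear
  after \<open>m\<close>, so the values \<open>S\<close> of \<open>w\<close> below \<open>m\<close> are \<open>d - i - 1\<close> of the \<open>m - i\<close> values missed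
  by the prefix. The words \<open>w\<close> of length \<open>L\<close> over \<open>S\<close> and \<open>m\<close>, using all of \<open>S\<close>, with
  \<open>m # w\<close> avoiding 010, are counted by the Stirling number \<open>stirling (L + 1) (L + 1 - card S)\<close>:
  removing the smallest letter of \<open>S\<close> yields the Stirling recurrence.\<close>

lemma ex_less_pair_Cons:
  "(\<exists>j l. j < l \<and> l < length (y # ys) \<and> P ((y # ys) ! j) ((y # ys) ! l))
     \<longleftrightarrow> (\<exists>z\<in>set ys. P y z) \<or> (\<exists>j l. j < l \<and> l < length ys \<and> P (ys ! j) (ys ! l))"
proof
  assume "\<exists>j l. j < l \<and> l < length (y # ys) \<and> P ((y # ys) ! j) ((y # ys) ! l)"
  then obtain j l where "j < l" "l < Suc (length ys)" "P ((y # ys) ! j) ((y # ys) ! l)" by auto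
  then obtain l' where "l = Suc l'" "l' < length ys" "P ((y # ys) ! j) (ys ! l')"
    by (cases l) auto
  then show "(\<exists>z\<in>set ys. P y z) \<or> (\<exists>j l. j < l \<and> l < length ys \<and> P (ys ! j) (ys ! l))"
    using \<open>j < l\<close> by (cases j) (auto intro: nth_mem)
next
  assume "(\<exists>z\<in>set ys. P y z) \<or> (\<exists>j l. j < l \<and> l < length ys \<and> P (ys ! j) (ys ! l))"
  then show "\<exists>j l. j < l \<and> l < length (y # ys) \<and> P ((y # ys) ! j) ((y # ys) ! l)"
  proof
    assume "\<exists>z\<in>set ys. P y z"
    then obtain l where "l < length ys" "P y (ys ! l)" by (auto simp: in_set_conv_nth)
    then show ?thesis by (intro exI[of _ 0] exI[of _ "Suc l"]) auto
  next
    assume "\<exists>j l. j < l \<and> l < length ys \<and> P (ys ! j) (ys ! l)"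
    then obtain j l where "j < l" "l < length ys" "P (ys ! j) (ys ! l)" by blast
    then show ?thesis by (intro exI[of _ "Suc j"] exI[of _ "Suc l"]) auto
  qed
qed

lemma mem_dropWhile_le_iff:
  fixes x :: "'a::linorder"
  shows "x \<in> set (dropWhile (\<lambda>y. y \<le> x) xs) \<longleftrightarrow>
     (\<exists>j l. j < l \<and> l < length xs \<and> x < xs ! j \<and> xs ! l = x)"
proof (induction xs)
  case (Cons y ys)
  have shift: "(\<exists>j l. j < l \<and> l < length (y # ys) \<and> x < (y # ys) ! j \<and> (y # ys) ! l = x)
      \<longleftrightarrow> (x < y \<and> x \<in> set ys) \<or> (\<exists>j l. j < l \<and> l < length ys \<and> x < ys ! j \<and> ys ! l = x)"
    using ex_less_pair_Cons[where P = "\<lambda>u v. x < u \<and> v = x"] by auto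
  show ?case
  proof (cases "y \<le> x")
    case True
    then have "\<not> x < y" by (simp add: not_less)
    moreover have "dropWhile (\<lambda>y. y \<le> x) (y # ys) = dropWhile (\<lambda>y. y \<le> x) ys"
      using True by simp
    ultimately show ?thesis by (simp only: Cons.IH shift simp_thms)
  next
    case False
    have "(\<exists>j l. j < l \<and> l < length ys \<and> x < ys ! j \<and> ys ! l = x) \<Longrightarrow> x \<in> set ys"
      by (auto intro: nth_mem)
    with False shift show ?thesis by auto
  qed
qed simp

lemma avoids_010_Nil [simp]: "avoids_010 []"
  by (simp add: avoids_010_def)

lemma avoids_010_Cons [simp]:
  "avoids_010 (x # xs) \<longleftrightarrow> avoids_010 xs \<and> x \<notin> set (dropWhile (\<lambda>y. y \<le> x) xs)"
proof -
  have "(\<exists>i j l. i < j \<and> j < l \<and> l < length (x # xs) \<and>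
            (x # xs) ! i = (x # xs) ! l \<and> (x # xs) ! i < (x # xs) ! j)
     \<longleftrightarrow> (\<exists>i j l. i < j \<and> j < l \<and> l < length xs \<and> xs ! i = xs ! l \<and> xs ! i < xs ! j)
       \<or> (\<exists>j l. j < l \<and> l < length xs \<and> x < xs ! j \<and> xs ! l = x)" (is "?A \<longleftrightarrow> ?B \<or> ?C")
  proof
    assume ?A
    then obtain i j l where "i < j" "j < l" "l < Suc (length xs)"
      "(x # xs) ! i = (x # xs) ! l" "(x # xs) ! i < (x # xs) ! j" by auto
    then show "?B \<or> ?C"
      by (cases i; cases j; cases l) fastforce+
  next
    assume "?B \<or> ?C"
    then show ?A
    proof
      assume ?B
      then obtain i j l where "i < j \<and> j < l \<and> l < length xs \<and> xs ! i = xs ! l \<and> xs ! i < xs ! j"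
        by blast
      then show ?A by (intro exI[of _ "Suc i"] exI[of _ "Suc j"] exI[of _ "Suc l"]) auto
    next
      assume ?C
      then obtain j l where "j < l \<and> l < length xs \<and> x < xs ! j \<and> xs ! l = x" by blast
      then show ?A by (intro exI[of _ 0] exI[of _ "Suc j"] exI[of _ "Suc l"]) auto
    qed
  qed
  then show ?thesis unfolding avoids_010_def mem_dropWhile_le_iff by blast
qed

lemma set_dropWhile_append_Cons:
  "\<not> P y \<Longrightarrow> set (dropWhile P (xs @ y # zs)) = set (dropWhile P xs) \<union> insert y (set zs)"
  by (induction xs) auto

lemma set_dropWhile_insert_subset:
  "P a \<Longrightarrow> set (dropWhile P (xs @ a # ys)) \<subseteq> insert a (set (dropWhile P (xs @ ys)))"
  by (induction xs) auto

lemma set_dropWhile_remove1_subset: "set (dropWhile P (remove1 a xs)) \<subseteq> set (dropWhile P xs)"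
  by (induction xs) (auto dest: set_dropWhileD)

lemma avoids_010_remove1: "avoids_010 xs \<Longrightarrow> avoids_010 (remove1 a xs)"
  by (induction xs) (use set_dropWhile_remove1_subset in fastforce)+

lemma avoids_010_insert_min:
  assumes "\<forall>z\<in>set (xs @ ys). a < z" and "avoids_010 (xs @ ys)"
  shows "avoids_010 (xs @ a # ys)"
  using assms
proof (induction xs)
  case Nil
  then show ?case by (auto dest: set_dropWhileD)
next
  case (Cons x xs)
  then have "a \<le> x" "a \<noteq> x" by auto
  with Cons show ?case using set_dropWhile_insert_subset[of "\<lambda>y. y \<le> x" a xs ys] by auto
qed

lemma avoids_010_append_Cons_iff:
  assumes "\<forall>x\<in>set xs. x < m"
  shows "avoids_010 (xs @ m # ys) \<longleftrightarrow> avoids_010 xs \<and> avoids_010 (m # ys) \<and> set xs \<inter> set ys = {}"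
  using assms
proof (induction xs)
  case (Cons x xs)
  then have "\<not> m \<le> x" by simp
  with Cons show ?case by (auto simp: set_dropWhile_append_Cons)
qed simp

fun dup_first :: "'a \<Rightarrow> 'a list \<Rightarrow> 'a list" where
  "dup_first a [] = []"
| "dup_first a (x # xs) = (if x = a then a # a # xs else x # dup_first a xs)"

lemma set_dup_first [simp]: "set (dup_first a xs) = set xs"
  by (induction xs) auto

lemma length_dup_first: "a \<in> set xs \<Longrightarrow> length (dup_first a xs) = Suc (length xs)"
  by (induction xs) auto

lemma remove1_dup_first [simp]: "remove1 a (dup_first a xs) = xs"
  by (induction xs) auto

lemma avoids_010_dup_first: "avoids_010 xs \<Longrightarrow> avoids_010 (dup_first a xs)"
proof (induction xs)
  case (Cons x xs)
  have "set (dropWhile (\<lambda>y. y \<le> x) (dup_first a xs)) = set (dropWhile (\<lambda>y. y \<le> x) xs)"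
    by (induction xs) auto
  with Cons show ?case by auto
qed simp

text \<open>Between two occurrences of the smallest entry there can be no larger one,
  so a repeated smallest entry occurs in a block at its first position.\<close>
lemma dup_first_remove1:
  assumes "a \<in> set (remove1 a w)" and "\<forall>z\<in>set w. a \<le> z" and "avoids_010 w"
  shows "dup_first a (remove1 a w) = w"
  using assms
proof (induction w)
  case (Cons x xs)
  show ?case
  proof (cases "x = a")
    case True
    with Cons.prems have "a \<in> set xs" "a \<notin> set (dropWhile (\<lambda>y. y \<le> a) xs)" by auto
    with Cons.prems(2) obtain xs' where "xs = a # xs'"
      by (cases xs) (auto split: if_splits)
    with True show ?thesis by simp
  next
    case False
    with Cons show ?thesis by auto
  qed
qed simp

text \<open>The words that may follow the first occurrence of the maximum \<open>t\<close>: their entries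
  below \<open>t\<close> form exactly the set \<open>S\<close>.\<close>
definition suffix_words :: "nat \<Rightarrow> nat set \<Rightarrow> nat \<Rightarrow> nat list set" where
  "suffix_words L S t = {w. length w = L \<and> set w \<subseteq> insert t S \<and> S \<subseteq> set w \<and> avoids_010 (t # w)}"

lemma finite_suffix_words [simp]: "finite (suffix_words L S t)"
proof (cases "finite S")
  case True
  then have "finite {w. set w \<subseteq> insert t S \<and> length w = L}"
    by (simp add: finite_lists_length_eq)
  then show ?thesis by (rule rev_finite_subset) (auto simp: suffix_words_def)
next
  case False
  then have "suffix_words L S t = {}"
    by (auto simp: suffix_words_def dest: finite_subset[OF _ List.finite_set])
  then show ?thesis by simp
qed

lemma suffix_words_empty: "suffix_words L {} t = {replicate L t}"
proof -
  have "avoids_010 (replicate L t)" for L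
    by (induction L) auto
  from this[of "Suc L"] show ?thesis
    by (auto simp: suffix_words_def intro: replicate_eqI)
qed

lemma suffix_words_0: "suffix_words 0 S t = (if S = {} then {[]} else {})"
  by (auto simp: suffix_words_def)

lemma card_suffix_words_min_repeated:
  assumes aS: "a \<in> S" and amin: "\<forall>x\<in>S. a \<le> x" and lt: "\<forall>x\<in>S. x < t"
  shows "card {w \<in> suffix_words (Suc L) S t. a \<in> set (remove1 a w)} = card (suffix_words L S t)"
proof -
  have "a < t" using aS lt by blast
  have dup: "dup_first a w \<in> suffix_words (Suc L) S t" "a \<in> set (remove1 a (dup_first a w))"
    if w: "w \<in> suffix_words L S t" for w
  proof -
    have "a \<in> set w" using w aS by (auto simp: suffix_words_def)
    moreover have "avoids_010 (dup_first a (t # w))"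
      using w by (intro avoids_010_dup_first) (simp add: suffix_words_def)
    ultimately show "dup_first a w \<in> suffix_words (Suc L) S t" "a \<in> set (remove1 a (dup_first a w))"
      using w \<open>a < t\<close> by (auto simp: suffix_words_def length_dup_first)
  qed
  have remove: "remove1 a w \<in> suffix_words L S t" and dup_remove: "dup_first a (remove1 a w) = w"
    if w: "w \<in> suffix_words (Suc L) S t" and twice: "a \<in> set (remove1 a w)" for w
  proof -
    have "avoids_010 (remove1 a (t # w))"
      using w by (intro avoids_010_remove1) (simp add: suffix_words_def)
    moreover have "S \<subseteq> set (remove1 a w)"
    proof
      fix x assume "x \<in> S"
      with w twice show "x \<in> set (remove1 a w)"
        by (cases "x = a") (auto simp: suffix_words_def in_set_remove1)
    qed
    ultimately show "remove1 a w \<in> suffix_words L S t"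
      using w aS \<open>a < t\<close> set_remove1_subset[of a w] by (auto simp: suffix_words_def length_remove1)
    have "\<forall>z\<in>set w. a \<le> z" using w amin \<open>a < t\<close> by (fastforce simp: suffix_words_def)
    with w twice show "dup_first a (remove1 a w) = w"
      by (intro dup_first_remove1) (auto simp: suffix_words_def)
  qed
  have "bij_betw (dup_first a) (suffix_words L S t) {w \<in> suffix_words (Suc L) S t. a \<in> set (remove1 a w)}"
    by (rule bij_betw_byWitness[where f' = "remove1 a"]) (use dup remove dup_remove in auto)
  then show ?thesis by (simp add: bij_betw_same_card)
qed

lemma card_suffix_words_min_once:
  assumes aS: "a \<in> S" and amin: "\<forall>x\<in>S. a \<le> x" and lt: "\<forall>x\<in>S. x < t"
  shows "card {w \<in> suffix_words (Suc L) S t. a \<notin> set (remove1 a w)}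
           = Suc L * card (suffix_words L (S - {a}) t)"
proof -
  have "a < t" using aS lt by blast
  define ins where "ins = (\<lambda>(w, r). take r w @ a # drop r (w :: nat list))"
  define pos where "pos = (\<lambda>w. (remove1 a w, length (takeWhile (\<lambda>x. x \<noteq> a) w)))"
  have ins: "ins (w, r) \<in> suffix_words (Suc L) S t" "a \<notin> set (remove1 a (ins (w, r)))"
    and pos_ins: "pos (ins (w, r)) = (w, r)"
    if w: "w \<in> suffix_words L (S - {a}) t" and r: "r \<le> L" for w r
  proof -
    have "a \<notin> set w" using w \<open>a < t\<close> by (auto simp: suffix_words_def)
    have "\<forall>z\<in>set ((t # take r w) @ drop r w). a < z"
      using w amin \<open>a < t\<close> by (fastforce simp: suffix_words_def dest: in_set_takeD in_set_dropD)
    moreover have "avoids_010 ((t # take r w) @ drop r w)" using w by (simp add: suffix_words_def)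
    ultimately have "avoids_010 (t # ins (w, r))"
      using avoids_010_insert_min by (fastforce simp: ins_def)
    moreover have "set (ins (w, r)) = insert a (set w)"
      by (simp add: ins_def) (metis Un_insert_right append_take_drop_id set_append)
    moreover show rem: "a \<notin> set (remove1 a (ins (w, r)))"
      using \<open>a \<notin> set w\<close> by (auto simp: ins_def remove1_append dest: in_set_takeD)
    ultimately show "ins (w, r) \<in> suffix_words (Suc L) S t"
      using w aS r by (auto simp: suffix_words_def ins_def)
    have "takeWhile (\<lambda>x. x \<noteq> a) (ins (w, r)) = take r w"
      using \<open>a \<notin> set w\<close> by (auto simp: ins_def takeWhile_append dest: in_set_takeD)
    then show "pos (ins (w, r)) = (w, r)"
      using \<open>a \<notin> set w\<close> w r by (auto simp: ins_def pos_def remove1_append suffix_words_def dest: in_set_takeD)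
  qed
  have pos: "pos w \<in> suffix_words L (S - {a}) t \<times> {0..L}" and ins_pos: "ins (pos w) = w"
    if w: "w \<in> suffix_words (Suc L) S t" and once: "a \<notin> set (remove1 a w)" for w
  proof -
    have "a \<in> set w" using w aS by (auto simp: suffix_words_def)
    then obtain xs ys where w_eq: "w = xs @ a # ys" and "a \<notin> set xs" by (blast dest: split_list_first)
    then have rem: "remove1 a w = xs @ ys" by (simp add: remove1_append)
    with once have "a \<notin> set ys" by simp
    have "avoids_010 (remove1 a (t # w))"
      using w by (intro avoids_010_remove1) (simp add: suffix_words_def)
    with rem \<open>a < t\<close> have "avoids_010 (t # xs @ ys)" by simp
    with w \<open>a \<notin> set xs\<close> \<open>a \<notin> set ys\<close> have "xs @ ys \<in> suffix_words L (S - {a}) t"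
      by (auto simp: suffix_words_def w_eq)
    moreover have tw: "takeWhile (\<lambda>x. x \<noteq> a) w = xs"
      using w_eq \<open>a \<notin> set xs\<close> by (auto simp: takeWhile_append)
    moreover have "length xs \<le> L" using w w_eq by (simp add: suffix_words_def)
    ultimately show "pos w \<in> suffix_words L (S - {a}) t \<times> {0..L}"
      by (simp add: pos_def rem)
    show "ins (pos w) = w"
      using w_eq tw rem by (simp add: ins_def pos_def)
  qed
  have "bij_betw ins (suffix_words L (S - {a}) t \<times> {0..L})
          {w \<in> suffix_words (Suc L) S t. a \<notin> set (remove1 a w)}"
  proof (rule bij_betw_byWitness[where f' = pos])
    show "pos ` {w \<in> suffix_words (Suc L) S t. a \<notin> set (remove1 a w)}
            \<subseteq> suffix_words L (S - {a}) t \<times> {0..L}"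
      using pos by blast
  qed (use ins pos_ins ins_pos in auto)
  then have "card {w \<in> suffix_words (Suc L) S t. a \<notin> set (remove1 a w)}
      = card (suffix_words L (S - {a}) t \<times> {0..L})"
    by (simp add: bij_betw_same_card)
  then show ?thesis by (simp add: card_cartesian_product mult.commute)
qed

text \<open>Removing the smallest letter \<open>a\<close>: either it is repeated, and one copy of the block
  of \<open>a\<close>'s is deleted, or it occurs once, at any of the \<open>L + 1\<close> positions.\<close>
lemma card_suffix_words_Suc:
  assumes "finite S" and "S \<noteq> {}" and "\<forall>x\<in>S. x < t"
  shows "card (suffix_words (Suc L) S t)
           = card (suffix_words L S t) + Suc L * card (suffix_words L (S - {Min S}) t)"
proof -
  have "Min S \<in> S" "\<forall>x\<in>S. Min S \<le> x" using assms by auto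
  have "suffix_words (Suc L) S t
          = {w \<in> suffix_words (Suc L) S t. Min S \<in> set (remove1 (Min S) w)}
            \<union> {w \<in> suffix_words (Suc L) S t. Min S \<notin> set (remove1 (Min S) w)}" by blast
  then have "card (suffix_words (Suc L) S t)
      = card {w \<in> suffix_words (Suc L) S t. Min S \<in> set (remove1 (Min S) w)}
        + card {w \<in> suffix_words (Suc L) S t. Min S \<notin> set (remove1 (Min S) w)}"
    by (metis (no_types, lifting) card_Un_disjoint disjoint_iff finite_Un finite_suffix_words mem_Collect_eq)
  then show ?thesis
    using card_suffix_words_min_repeated card_suffix_words_min_once \<open>Min S \<in> S\<close> \<open>\<forall>x\<in>S. Min S \<le> x\<close> assms(3)
    by simp
qed

lemma card_suffix_words:
  assumes "finite S" and "\<forall>x\<in>S. x < t"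
  shows "card (suffix_words L S t) = stirling (Suc L) (Suc L - card S)"
  using assms
proof (induction L arbitrary: S)
  case 0
  then show ?case by (cases "S = {}") (auto simp: suffix_words_0 Suc_le_eq card_gt_0_iff)
next
  case (Suc L)
  show ?case
  proof (cases "S = {}")
    case True
    then show ?thesis by (simp add: suffix_words_empty)
  next
    case False
    define k where "k = card S"
    have "k \<ge> 1" using False Suc.prems by (simp add: k_def Suc_le_eq card_gt_0_iff)
    have "card (S - {Min S}) = k - 1" using Suc.prems False by (simp add: k_def)
    then have rec: "card (suffix_words (Suc L) S t)
        = stirling (Suc L) (Suc L - k) + Suc L * stirling (Suc L) (Suc L - (k - 1))"
      using card_suffix_words_Suc[OF Suc.prems(1) False Suc.prems(2)] Suc.IH[of S]
        Suc.IH[of "S - {Min S}"] Suc.prems by (simp add: k_def)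
    show ?thesis
    proof (cases "k \<le> Suc L")
      case True
      then have "Suc (Suc L) - k = Suc (Suc L - k)" "Suc L - (k - 1) = Suc (Suc L - k)"
        using \<open>k \<ge> 1\<close> by auto
      then show ?thesis by (simp add: rec flip: k_def)
    next
      case False
      then have "Suc (Suc L) - k = 0" "Suc L - k = 0" "Suc L - (k - 1) = 0" by auto
      then show ?thesis by (simp add: rec flip: k_def)
    qed
  qed
qed

lemma binom_int_of_nat [simp]: "binom_int (int a) (int b) = a choose b"
  by (simp add: binom_int_def binomial_eq_0)

lemma stirling1_int_diff: "0 < a \<Longrightarrow> stirling1_int a (int a - int k) = stirling a (a - k)"
  by (simp add: stirling1_int_def nat_diff_distrib)

lemma finite_Bset: "finite (Bset n m d)"
proof -
  have "Bset n m d \<subseteq> {s. set s \<subseteq> {0..<n} \<and> length s = n}"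
    by (auto simp: Bset_def inv_seq_def in_set_conv_nth) (metis less_trans_Suc not_less_eq)
  then show ?thesis by (rule finite_subset) (simp add: finite_lists_length_eq)
qed

lemma Bset_less_Max:
  assumes "s \<in> Bset n j d" and "j < m" and "x \<in> set s"
  shows "x < m"
  using assms Max_ge[of "set s" x] by (simp add: Bset_def)

lemma inv_seq_append_Cons_iff:
  assumes "\<forall>x\<in>set w. x \<le> m"
  shows "inv_seq n (pre @ m # w) \<longleftrightarrow>
           n = length pre + Suc (length w) \<and> inv_seq (length pre) pre \<and> m \<le> length pre"
proof -
  have "(\<forall>k < length pre + Suc (length w). (pre @ m # w) ! k < Suc k)
          \<longleftrightarrow> (\<forall>k < length pre. pre ! k < Suc k) \<and> m \<le> length pre"
  proof
    assume all: "\<forall>k < length pre + Suc (length w). (pre @ m # w) ! k < Suc k"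
    from all[rule_format, of "length pre"] have "m \<le> length pre" by simp
    moreover have "\<forall>k < length pre. pre ! k < Suc k"
    proof (intro allI impI)
      fix k assume "k < length pre"
      with all[rule_format, of k] show "pre ! k < Suc k" by (simp add: nth_append)
    qed
    ultimately show "(\<forall>k < length pre. pre ! k < Suc k) \<and> m \<le> length pre" by blast
  next
    assume pre: "(\<forall>k < length pre. pre ! k < Suc k) \<and> m \<le> length pre"
    show "\<forall>k < length pre + Suc (length w). (pre @ m # w) ! k < Suc k"
    proof (intro allI impI)
      fix k assume k: "k < length pre + Suc (length w)"
      consider "k < length pre" | "k = length pre" | "length pre < k" by linarith
      then show "(pre @ m # w) ! k < Suc k"
      proof cases
        case 3
        then have "(pre @ m # w) ! k \<in> set w"
          using k by (auto simp: nth_append nth_Cons' intro!: nth_mem)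
        then show ?thesis using 3 pre assms by fastforce
      qed (use pre in \<open>auto simp: nth_append\<close>)
    qed
  qed
  then show ?thesis by (auto simp: inv_seq_def)
qed

definition suffix_choices :: "nat \<Rightarrow> nat \<Rightarrow> nat \<Rightarrow> nat list \<Rightarrow> (nat set \<times> nat list) set" where
  "suffix_choices L m k pre = (SIGMA S:{S. S \<subseteq> {0..<m} - set pre \<and> card S = k}. suffix_words L S m)"

lemma finite_suffix_choices [simp]: "finite (suffix_choices L m k pre)"
proof -
  have "finite {S. S \<subseteq> {0..<m} - set pre \<and> card S = k}"
    by (rule finite_subset[of _ "Pow ({0..<m} - set pre)"]) auto
  then show ?thesis by (simp add: suffix_choices_def)
qed

lemma card_suffix_choices:
  assumes "set pre \<subseteq> {0..<m}"
  shows "card (suffix_choices L m k pre) = (m - card (set pre) choose k) * stirling (Suc L) (Suc L - k)"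
proof -
  define subsets where "subsets = {S. S \<subseteq> {0..<m} - set pre \<and> card S = k}"
  have "finite subsets"
    by (rule finite_subset[of _ "Pow ({0..<m} - set pre)"]) (auto simp: subsets_def)
  then have "card (suffix_choices L m k pre) = (\<Sum>S\<in>subsets. card (suffix_words L S m))"
    by (simp add: suffix_choices_def subsets_def)
  also have "\<dots> = (\<Sum>S\<in>subsets. stirling (Suc L) (Suc L - k))"
  proof (rule sum.cong)
    fix S assume "S \<in> subsets"
    then have "finite S" "\<forall>x\<in>S. x < m" "card S = k"
      by (auto simp: subsets_def intro: finite_subset)
    then show "card (suffix_words L S m) = stirling (Suc L) (Suc L - k)"
      by (simp add: card_suffix_words)
  qed simp
  also have "\<dots> = card subsets * stirling (Suc L) (Suc L - k)" by simp
  also have "card subsets = m - card (set pre) choose k"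
    using n_subsets[of "{0..<m} - set pre" k] card_Diff_subset[OF _ assms] by (simp add: subsets_def)
  finally show ?thesis .
qed

text \<open>A sequence in \<open>Bset n m d\<close> is \<open>pre @ m # w\<close>, split at the first occurrence of its
  maximum \<open>m\<close>, at the one-based position \<open>p\<close>; \<open>S\<close> is the set of entries of \<open>w\<close> below \<open>m\<close>,
  \<open>i\<close> and \<open>j\<close> are the number of values and the maximum of \<open>pre\<close>.\<close>
definition first_max_parts ::
    "nat \<Rightarrow> nat \<Rightarrow> nat \<Rightarrow> (nat \<times> nat \<times> nat \<times> nat list \<times> nat set \<times> nat list) set" where
  "first_max_parts n m d =
     (SIGMA i:{0..<d}. SIGMA p:{m+1..n}. SIGMA j:{0..<m}. SIGMA pre:Bset (p - 1) j i.
        suffix_choices (n - p) m (d - Suc i) pre)"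

definition first_max_split :: "nat \<Rightarrow> nat list \<Rightarrow> nat \<times> nat \<times> nat \<times> nat list \<times> nat set \<times> nat list" where
  "first_max_split m s =
     (let pre = takeWhile (\<lambda>x. x \<noteq> m) s; w = tl (dropWhile (\<lambda>x. x \<noteq> m) s)
      in (card (set pre), Suc (length pre), Max (set pre), pre, set w - {m}, w))"

lemma first_max_split_join:
  assumes "x \<in> first_max_parts n m d"
  shows "first_max_split m ((\<lambda>(i, p, j, pre, S, w). pre @ m # w) x) = x"
proof -
  obtain i p j pre S w where x: "x = (i, p, j, pre, S, w)" using prod_cases6 by blast
  with assms have "m \<notin> set pre"
    by (auto simp: first_max_parts_def suffix_choices_def dest: Bset_less_Max)
  then have "takeWhile (\<lambda>x. x \<noteq> m) (pre @ m # w) = pre" "dropWhile (\<lambda>x. x \<noteq> m) (pre @ m # w) = m # w"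
    by (auto simp: takeWhile_append dropWhile_append)
  moreover from assms x have "p = Suc (length pre)" "i = card (set pre)" "j = Max (set pre)" "S = set w - {m}"
    by (auto simp: first_max_parts_def suffix_choices_def Bset_def inv_seq_def suffix_words_def)
  ultimately show ?thesis by (simp add: first_max_split_def x)
qed

lemma first_max_join_inj: "inj_on (\<lambda>(i, p, j, pre, S, w). pre @ m # w) (first_max_parts n m d)"
  by (rule inj_on_inverseI[where g = "first_max_split m"]) (rule first_max_split_join)

lemma card_set_append_Cons:
  assumes "set w \<subseteq> insert m S" and "S \<subseteq> set w" and "m \<notin> S" and "finite S"
    and "set pre \<inter> insert m S = {}"
  shows "card (set (pre @ m # w)) = card (set pre) + Suc (card S)"
proof -
  have "set (pre @ m # w) = set pre \<union> insert m S" using assms(1,2) by auto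
  then show ?thesis using assms(3-5) by (simp add: card_Un_disjoint)
qed

lemma first_max_join_image_subset:
  "(\<lambda>(i, p, j, pre, S, w). pre @ m # w) ` first_max_parts n m d \<subseteq> Bset n m d"
proof clarify
  fix i p j pre S w assume "(i, p, j, pre, S, w) \<in> first_max_parts n m d"
  then have ranges: "i < d" "m < p" "p \<le> n" "j < m"
    and pre: "pre \<in> Bset (p - 1) j i" and S: "S \<subseteq> {0..<m} - set pre" "card S = d - Suc i"
    and w: "w \<in> suffix_words (n - p) S m"
    by (auto simp: first_max_parts_def suffix_choices_def)
  have pre_less: "\<forall>x\<in>set pre. x < m" using pre ranges by (blast intro: Bset_less_Max)
  have S_less: "\<forall>x\<in>S. x < m" using S by auto
  have w_le: "\<forall>x\<in>set w. x \<le> m" using w S_less by (fastforce simp: suffix_words_def)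
  have "set pre \<inter> set w = {}" using w S pre_less by (fastforce simp: suffix_words_def)
  then have "avoids_010 (pre @ m # w)"
    using pre w pre_less by (simp add: avoids_010_append_Cons_iff Bset_def suffix_words_def)
  moreover have "inv_seq n (pre @ m # w)"
  proof -
    have "inv_seq (length pre) pre" "length pre = p - 1"
      using pre by (simp_all add: Bset_def inv_seq_def)
    with w ranges w_le show ?thesis by (simp add: inv_seq_append_Cons_iff suffix_words_def)
  qed
  moreover have "Max (set (pre @ m # w)) = m"
    using pre_less w_le by (intro Max_eqI) auto
  moreover have "card (set (pre @ m # w)) = d"
  proof -
    have "finite S" "m \<notin> S" "set pre \<inter> insert m S = {}"
      using S pre_less by (auto intro: finite_subset)
    with w have "card (set (pre @ m # w)) = card (set pre) + Suc (card S)"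
      by (intro card_set_append_Cons) (auto simp: suffix_words_def)
    with pre S ranges show ?thesis by (simp add: Bset_def)
  qed
  ultimately show "pre @ m # w \<in> Bset n m d" by (simp add: Bset_def)
qed

lemma first_max_join_surj:
  assumes "n \<ge> 1" and "m \<ge> 1"
  shows "Bset n m d \<subseteq> (\<lambda>(i, p, j, pre, S, w). pre @ m # w) ` first_max_parts n m d"
proof
  fix s assume s: "s \<in> Bset n m d"
  with assms have "s \<noteq> []" by (auto simp: Bset_def inv_seq_def)
  with s have "m \<in> set s" and le_m: "\<forall>x\<in>set s. x \<le> m" by (auto simp: Bset_def dest: Max_in)
  then obtain pre w where s_eq: "s = pre @ m # w" and "m \<notin> set pre"
    by (blast dest: split_list_first)
  define p i j S where "p = Suc (length pre)" and "i = card (set pre)"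
    and "j = Max (set pre)" and "S = set w - {m}"
  have pre_less: "\<forall>x\<in>set pre. x < m"
    using le_m \<open>m \<notin> set pre\<close> by (auto simp: s_eq order.strict_iff_order)
  have w_le: "\<forall>x\<in>set w. x \<le> m" using le_m s_eq by simp
  have inv: "n = length pre + Suc (length w)" "inv_seq (length pre) pre" "m \<le> length pre"
    using s w_le by (simp_all add: s_eq Bset_def inv_seq_append_Cons_iff)
  have av: "avoids_010 pre" "avoids_010 (m # w)" "set pre \<inter> set w = {}"
    using s pre_less by (simp_all add: s_eq Bset_def avoids_010_append_Cons_iff)
  have "pre \<noteq> []" using inv assms by auto
  then have "j < m" using pre_less by (simp add: j_def)
  have S_sub: "S \<subseteq> {0..<m} - set pre" using w_le av by (auto simp: S_def)
  have "card (set s) = i + Suc (card S)"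
    unfolding s_eq i_def using S_sub \<open>m \<notin> set pre\<close> av(3)
    by (intro card_set_append_Cons) (auto simp: S_def)
  with s have "d = i + Suc (card S)" by (simp add: Bset_def)
  then have "(i, p, j, pre, S, w) \<in> first_max_parts n m d"
    using inv av S_sub \<open>j < m\<close>
    by (auto simp: first_max_parts_def suffix_choices_def Bset_def suffix_words_def
        p_def i_def j_def S_def)
  then show "s \<in> (\<lambda>(i, p, j, pre, S, w). pre @ m # w) ` first_max_parts n m d"
    using s_eq by force
qed

lemma card_first_max_parts:
  "card (first_max_parts n m d)
     = (\<Sum>i\<in>{0..<d}. \<Sum>p\<in>{m+1..n}. \<Sum>j\<in>{0..<m}. bnum (p - 1) j i
          * (binom_int (int m - int i) (int d - int i - 1)
             * stirling1_int (n - p + 1) (int n - int p - int d + int i + 2)))"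
proof -
  have "card (first_max_parts n m d) = (\<Sum>i\<in>{0..<d}. \<Sum>p\<in>{m+1..n}. \<Sum>j\<in>{0..<m}.
          \<Sum>pre\<in>Bset (p - 1) j i. card (suffix_choices (n - p) m (d - Suc i) pre))"
    by (simp add: first_max_parts_def finite_Bset)
  also have "\<dots> = (\<Sum>i\<in>{0..<d}. \<Sum>p\<in>{m+1..n}. \<Sum>j\<in>{0..<m}. \<Sum>pre\<in>Bset (p - 1) j i.
          binom_int (int m - int i) (int d - int i - 1)
          * stirling1_int (n - p + 1) (int n - int p - int d + int i + 2))"
  proof (intro sum.cong refl)
    fix i p j pre assume "i \<in> {0..<d}" "p \<in> {m+1..n}" "j \<in> {0..<m}" and pre: "pre \<in> Bset (p - 1) j i"
    then have "set pre \<subseteq> {0..<m}" by (auto dest: Bset_less_Max)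
    moreover have "card (set pre) = i" using pre by (simp add: Bset_def)
    ultimately have "i \<le> m" using card_mono[of "{0..<m}" "set pre"] by simp
    have int_args: "int m - int i = int (m - i)" "int d - int i - 1 = int (d - Suc i)"
      "int n - int p - int d + int i + 2 = int (n - p + 1) - int (d - Suc i)"
      using \<open>i \<le> m\<close> \<open>i \<in> {0..<d}\<close> \<open>p \<in> {m+1..n}\<close> by auto
    have "card (suffix_choices (n - p) m (d - Suc i) pre)
        = (m - i choose (d - Suc i)) * stirling (n - p + 1) (n - p + 1 - (d - Suc i))"
      using card_suffix_choices[OF \<open>set pre \<subseteq> {0..<m}\<close>] \<open>card (set pre) = i\<close> by simp
    also have "\<dots> = binom_int (int m - int i) (int d - int i - 1)
        * stirling1_int (n - p + 1) (int n - int p - int d + int i + 2)"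
      using stirling1_int_diff[of "n - p + 1"] by (simp only: int_args binom_int_of_nat)
    finally show "card (suffix_choices (n - p) m (d - Suc i) pre)
        = binom_int (int m - int i) (int d - int i - 1)
          * stirling1_int (n - p + 1) (int n - int p - int d + int i + 2)" .
  qed
  finally show ?thesis by (simp add: bnum_def)
qed

theorem mainTheorem2:
  fixes n m d :: nat
  assumes "n \<ge> 1" and "m \<ge> 1"
  shows "bnum n m d =
    (\<Sum>i\<in>{0..<d}. binom_int (int m - int i) (int d - int i - 1) *
       (\<Sum>p\<in>{m+1..n}. stirling1_int (n - p + 1) (int n - int p - int d + int i + 2) *
          (\<Sum>j\<in>{0..<m}. bnum (p - 1) j i)))"
proof -
  have "bij_betw (\<lambda>(i, p, j, pre, S, w). pre @ m # w) (first_max_parts n m d) (Bset n m d)"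
    using first_max_join_inj first_max_join_image_subset first_max_join_surj[OF assms]
    by (blast intro: bij_betw_imageI)
  then have "bnum n m d = card (first_max_parts n m d)"
    by (simp add: bnum_def bij_betw_same_card)
  then show ?thesis
    by (simp add: card_first_max_parts sum_distrib_left sum_distrib_right mult_ac)
qed

end
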